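(* Let $(u_0,v_0)=(e_4+e_{13},\,e_6+e_{15})\in\mathcal Z(\mathbb S)$ and let $g$ be the left-invariant metric on $G_2$ defined on $\mathfrak g_2$ by $g(X,Y)=\langle X\cdot(u_0,v_0),\,Y\cdot(u_0,v_0)\rangle_{\mathbb R^{32}}$ (i.e. the pullback of the induced metric of $\mathcal Z(\mathbb S)\subset\mathbb R^{32}$ under the diffeomorphism $h\mapsto h\cdot(u_0,v_0)$). Then $(G_2,g)$ (equivalently $\mathcal Z(\mathbb S)$) has positive Ricci curvature, and its Ricci tensor, as a left-invariant symmetric bilinear form on $\mathfrak g_2$, is $$\mathrm{Ric}=\frac52\sum_{i=0}^2 X^i\otimes X^i+\frac{29}{54}\sum_{i=3}^5 X^i\otimes X^i+\frac56\sum_{i=6}^{13}X^i\otimes X^i .$$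
   Context: Cayley–Dickson algebras: $\mathbb A_0=\mathbb R$, $a^*=a$; $\mathbb A_n=\mathbb A_{n-1}\times\mathbb A_{n-1}$ with $(a,b)(c,d)=(ac-d^*b,\ da+bc^* )$, $(a,b)^*=(a^*,-b)$; canonical basis $e_i=(e_i,0)$, $e_{2^{n-1}+i}=(0,e_i)$ for $0\le i<2^{n-1}$. $\mathbb O=\mathbb A_3$, $\mathbb S=\mathbb A_4\cong\mathbb R^{16}$ (sedenions) with standard inner product. $\mathcal Z(\mathbb S)=\{(u,v)\in\mathbb S\times\mathbb S:\|u\|=\|v\|=\sqrt2,\ uv=0\}$ with metric induced from $\mathbb R^{32}$. $G_2=\mathrm{Aut}(\mathbb O)\subset\mathrm{SO}(8)$ (matrices w.r.t. $e_0,\dots,e_7$), acting on $\mathbb S=\mathbb O\times\mathbb O$ by $h(a,b)=(ha,hb)$ and diagonally on $\mathbb S\times\mathbb S$; this action is simply transitive on $\mathcal Z(\mathbb S)$. Its Lie algebra $\mathfrak g_2\subset\mathfrak{so}(8)$ acts likewise: $X\cdot(a,b)=(Xa,Xb)$. For $0\le i<j\le7$ let $E_{ij}\in\mathfrak{so}(8)$ have $(E_{ij})_{ij}=-1$, $(E_{ij})_{ji}=1$ and all other entries $0$ (rows/columns indexed $0,\dots,7$). The basis $X_0,\dots,X_{13}$ of $\mathfrak g_2$ is: $X_0=\tfrac12(E_{45}+E_{67})$, $X_1=\tfrac12(E_{46}-E_{57})$, $X_2=\tfrac12(E_{47}+E_{56})$, $X_3=-\tfrac{\sqrt3}6(2E_{23}-E_{45}+E_{67})$,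 $X_4=\tfrac{\sqrt3}6(2E_{13}+E_{46}+E_{57})$, $X_5=-\tfrac{\sqrt3}6(2E_{12}-E_{47}+E_{56})$, $X_6=-\tfrac12(E_{17}-E_{24})$, $X_7=\tfrac12(E_{16}+E_{25})$, $X_8=-\tfrac12(E_{15}-E_{26})$, $X_9=\tfrac12(E_{14}+E_{27})$, $X_{10}=\tfrac{\sqrt3}6(E_{16}-E_{25}+2E_{34})$, $X_{11}=\tfrac{\sqrt3}6(E_{17}+E_{24}+2E_{35})$, $X_{12}=-\tfrac{\sqrt3}6(E_{14}-E_{27}-2E_{36})$, $X_{13}=-\tfrac{\sqrt3}6(E_{15}+E_{26}-2E_{37})$; it is orthonormal for $-\mathrm{tr}(XY)$. $X^0,\dots,X^{13}$ denotes the dual basis. *)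

theory Defs
  imports Complex_Main
begin

text \<open>An element of A_n is a function nat => real supported on indices < 2^n
  (coordinates w.r.t. the canonical basis e_0, ..., e_(2^n - 1)).
  (a,b) in A_(n+1) has lower half a (indices < 2^n) and upper half b.\<close>

fun cd_conj :: "nat \<Rightarrow> (nat \<Rightarrow> real) \<Rightarrow> (nat \<Rightarrow> real)" where
  "cd_conj 0 a = (\<lambda>i. if i = 0 then a 0 else 0)"
| "cd_conj (Suc n) a =
     (\<lambda>i. if i < 2^n then cd_conj n a i else if i < 2^Suc n then - a i else 0)"

fun cd_mult :: "nat \<Rightarrow> (nat \<Rightarrow> real) \<Rightarrow> (nat \<Rightarrow> real) \<Rightarrow> (nat \<Rightarrow> real)" where
  "cd_mult 0 x y = (\<lambda>i. if i = 0 then x 0 * y 0 else 0)"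
| "cd_mult (Suc n) x y =
     (let h = (2::nat)^n;
          a = (\<lambda>i. if i < h then x i else 0);
          b = (\<lambda>i. if i < h then x (i + h) else 0);
          c = (\<lambda>i. if i < h then y i else 0);
          d = (\<lambda>i. if i < h then y (i + h) else 0);
          p = (\<lambda>i. cd_mult n a c i - cd_mult n (cd_conj n d) b i);
          q = (\<lambda>i. cd_mult n d a i + cd_mult n b (cd_conj n c) i)
      in (\<lambda>i. if i < h then p i else if i < 2 * h then q (i - h) else 0))"

definition sed_norm :: "(nat \<Rightarrow> real) \<Rightarrow> real" where
  "sed_norm u = sqrt (\<Sum>i<16. (u i)^2)"

definition ZS :: "((nat \<Rightarrow> real) \<times> (nat \<Rightarrow> real)) set" where
  "ZS = {(u, v). (\<forall>i\<ge>16. u i = 0 \<and> v i = 0) \<and> sed_norm u = sqrt 2 \<and> sed_norm v = sqrt 2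
                 \<and> cd_mult 4 u v = (\<lambda>_. 0)}"

definition sed_e :: "nat \<Rightarrow> (nat \<Rightarrow> real)" where
  "sed_e k = (\<lambda>i. if i = k then 1 else 0)"

definition u0 :: "nat \<Rightarrow> real" where "u0 = (\<lambda>i. sed_e 4 i + sed_e 13 i)"
definition v0 :: "nat \<Rightarrow> real" where "v0 = (\<lambda>i. sed_e 6 i + sed_e 15 i)"

type_synonym mat8 = "nat \<Rightarrow> nat \<Rightarrow> real"

definition mzero :: mat8 where "mzero = (\<lambda>_ _. 0)"
definition madd :: "mat8 \<Rightarrow> mat8 \<Rightarrow> mat8" where "madd A B = (\<lambda>i j. A i j + B i j)"
definition msub :: "mat8 \<Rightarrow> mat8 \<Rightarrow> mat8" where "msub A B = (\<lambda>i j. A i j - B i j)"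
definition mscale :: "real \<Rightarrow> mat8 \<Rightarrow> mat8" where "mscale c A = (\<lambda>i j. c * A i j)"
definition mmult :: "mat8 \<Rightarrow> mat8 \<Rightarrow> mat8" where
  "mmult A B = (\<lambda>i j. \<Sum>k<8. A i k * B k j)"
definition mbracket :: "mat8 \<Rightarrow> mat8 \<Rightarrow> mat8" where
  "mbracket A B = msub (mmult A B) (mmult B A)"

definition Emat :: "nat \<Rightarrow> nat \<Rightarrow> mat8" where
  "Emat i j = (\<lambda>r c. if r = i \<and> c = j then -1 else if r = j \<and> c = i then 1 else 0)"

definition g2_basis_list :: "mat8 list" where
  "g2_basis_list =
   [ mscale (1/2) (madd (Emat 4 5) (Emat 6 7)),
     mscale (1/2) (msub (Emat 4 6) (Emat 5 7)),
     mscale (1/2) (madd (Emat 4 7) (Emat 5 6)),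
     mscale (- sqrt 3 / 6) (madd (msub (mscale 2 (Emat 2 3)) (Emat 4 5)) (Emat 6 7)),
     mscale (sqrt 3 / 6) (madd (madd (mscale 2 (Emat 1 3)) (Emat 4 6)) (Emat 5 7)),
     mscale (- sqrt 3 / 6) (madd (msub (mscale 2 (Emat 1 2)) (Emat 4 7)) (Emat 5 6)),
     mscale (- 1/2) (msub (Emat 1 7) (Emat 2 4)),
     mscale (1/2) (madd (Emat 1 6) (Emat 2 5)),
     mscale (- 1/2) (msub (Emat 1 5) (Emat 2 6)),
     mscale (1/2) (madd (Emat 1 4) (Emat 2 7)),
     mscale (sqrt 3 / 6) (madd (msub (Emat 1 6) (Emat 2 5)) (mscale 2 (Emat 3 4))),
     mscale (sqrt 3 / 6) (madd (madd (Emat 1 7) (Emat 2 4)) (mscale 2 (Emat 3 5))),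
     mscale (- sqrt 3 / 6) (msub (msub (Emat 1 4) (Emat 2 7)) (mscale 2 (Emat 3 6))),
     mscale (- sqrt 3 / 6) (msub (madd (Emat 1 5) (Emat 2 6)) (mscale 2 (Emat 3 7))) ]"

definition Xb :: "nat \<Rightarrow> mat8" where "Xb k = g2_basis_list ! k"

definition g2_elem :: "(nat \<Rightarrow> real) \<Rightarrow> mat8" where
  "g2_elem a = (\<lambda>i j. \<Sum>k<14. a k * Xb k i j)"

definition g2 :: "mat8 set" where "g2 = range g2_elem"

text \<open>Dual basis X^k: the k-th coordinate of an element of g_2 in the basis X_0..X_13.\<close>
definition g2_coord :: "nat \<Rightarrow> mat8 \<Rightarrow> real" where
  "g2_coord k M = (THE a. (\<forall>i\<ge>14. a i = 0) \<and> g2_elem a = M) k"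

text \<open>Action of an 8x8 matrix on S = O x O: X(a,b) = (Xa, Xb).\<close>
definition actS :: "mat8 \<Rightarrow> (nat \<Rightarrow> real) \<Rightarrow> (nat \<Rightarrow> real)" where
  "actS M u = (\<lambda>i. if i < 8 then (\<Sum>j<8. M i j * u j)
                   else if i < 16 then (\<Sum>j<8. M (i - 8) j * u (j + 8)) else 0)"

definition gmet :: "mat8 \<Rightarrow> mat8 \<Rightarrow> real" where
  "gmet X Y = (\<Sum>i<16. actS X u0 i * actS Y u0 i) + (\<Sum>i<16. actS X v0 i * actS Y v0 i)"

text \<open>Levi-Civita connection on left-invariant fields, determined by the Koszul formula:
  g(nabla_X Y, Z) = 1/2 (g([X,Y],Z) - g([Y,Z],X) + g([Z,X],Y)).\<close>
definition LC :: "mat8 \<Rightarrow> mat8 \<Rightarrow> mat8" where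
  "LC X Y = (THE W. W \<in> g2 \<and> (\<forall>Z\<in>g2. gmet W Z =
      (1/2) * (gmet (mbracket X Y) Z - gmet (mbracket Y Z) X + gmet (mbracket Z X) Y)))"

definition curv :: "mat8 \<Rightarrow> mat8 \<Rightarrow> mat8 \<Rightarrow> mat8" where
  "curv X Y Z = msub (msub (LC X (LC Y Z)) (LC Y (LC X Z))) (LC (mbracket X Y) Z)"

definition ricci :: "mat8 \<Rightarrow> mat8 \<Rightarrow> real" where
  "ricci Y Z = (\<Sum>k<14. g2_coord k (curv (Xb k) Y Z))"

end

theory Submission
  imports Defs
begin

text \<open>Everything is left-invariant, so the claims are finite-dimensional linear algebra on
  \<open>g\<^sub>2 = \<real>\<^sup>1\<^sup>4\<close>. Write \<open>X\<^sub>k = s\<^sub>k Y\<^sub>k\<close> with integer matrices \<open>Y\<^sub>k\<close>. As \<open>u\<^sub>0 = e\<^sub>4 + e\<^sub>1\<^sub>3\<close> and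
  \<open>v\<^sub>0 = e\<^sub>6 + e\<^sub>1\<^sub>5\<close>, the metric only sees the columns 4, ..., 7 of a matrix, and in the basis
  \<open>Y\<^sub>k\<close> it is diagonal with weights 4, 2 and 6. Solving the Koszul formula against the
  structure constants of the \<open>Y\<^sub>k\<close> gives the Levi-Civita connection in closed form, hence the
  curvature. The Ricci tensor, being a trace, can be computed in either basis; it comes out
  diagonal with positive entries.\<close>

lemma less_8_cases:
  "(i::nat) < 8 \<Longrightarrow> i = 0 \<or> i = 1 \<or> i = 2 \<or> i = 3 \<or> i = 4 \<or> i = 5 \<or> i = 6 \<or> i = 7"
  by arith

lemma less_14_cases:
  "(i::nat) < 14 \<Longrightarrow> i = 0 \<or> i = 1 \<or> i = 2 \<or> i = 3 \<or> i = 4 \<or> i = 5 \<or> i = 6 \<or> i = 7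
    \<or> i = 8 \<or> i = 9 \<or> i = 10 \<or> i = 11 \<or> i = 12 \<or> i = 13"
  by arith

lemma less_16_cases:
  "(i::nat) < 16 \<Longrightarrow> i = 0 \<or> i = 1 \<or> i = 2 \<or> i = 3 \<or> i = 4 \<or> i = 5 \<or> i = 6 \<or> i = 7
    \<or> i = 8 \<or> i = 9 \<or> i = 10 \<or> i = 11 \<or> i = 12 \<or> i = 13 \<or> i = 14 \<or> i = 15"
  by arith

lemma weighted_sum_squares_pos:
  fixes c a :: "'i \<Rightarrow> real"
  assumes "finite A" "\<And>k. k \<in> A \<Longrightarrow> 0 < c k" "j \<in> A" "a j \<noteq> 0"
  shows "0 < (\<Sum>k\<in>A. c k * (a k * a k))"
proof (rule sum_pos2)
  show "0 < c j * (a j * a j)"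
    using assms(2-4) by (metis mult_pos_pos not_real_square_gt_zero)
  show "0 \<le> c k * (a k * a k)" if "k \<in> A" for k
    using assms(2) that by (simp add: less_imp_le)
qed (use assms(1,3) in auto)

lemma cd_mult_u0_v0: "cd_mult 4 u0 v0 = (\<lambda>_. 0)"
proof
  fix i :: nat
  show "cd_mult 4 u0 v0 i = 0"
  proof (cases "i < 16")
    case True
    then show ?thesis
      using less_16_cases[OF True]
      by (elim disjE) (simp_all add: eval_nat_numeral Let_def u0_def v0_def sed_e_def)
  qed (simp add: eval_nat_numeral Let_def)
qed

lemma u0_v0_in_ZS: "(u0, v0) \<in> ZS"
  using cd_mult_u0_v0
  by (simp add: ZS_def sed_norm_def u0_def v0_def sed_e_def eval_nat_numeral)

definition Y_list :: "mat8 list" where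
  "Y_list =
   [ madd (Emat 4 5) (Emat 6 7),
     msub (Emat 4 6) (Emat 5 7),
     madd (Emat 4 7) (Emat 5 6),
     madd (msub (mscale 2 (Emat 2 3)) (Emat 4 5)) (Emat 6 7),
     madd (madd (mscale 2 (Emat 1 3)) (Emat 4 6)) (Emat 5 7),
     madd (msub (mscale 2 (Emat 1 2)) (Emat 4 7)) (Emat 5 6),
     msub (Emat 1 7) (Emat 2 4),
     madd (Emat 1 6) (Emat 2 5),
     msub (Emat 1 5) (Emat 2 6),
     madd (Emat 1 4) (Emat 2 7),
     madd (msub (Emat 1 6) (Emat 2 5)) (mscale 2 (Emat 3 4)),
     madd (madd (Emat 1 7) (Emat 2 4)) (mscale 2 (Emat 3 5)),
     msub (msub (Emat 1 4) (Emat 2 7)) (mscale 2 (Emat 3 6)),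
     msub (madd (Emat 1 5) (Emat 2 6)) (mscale 2 (Emat 3 7)) ]"

definition Y_basis :: "nat \<Rightarrow> mat8" where "Y_basis k = Y_list ! k"

definition X_scale :: "nat \<Rightarrow> real" where
  "X_scale k = [1/2, 1/2, 1/2, - sqrt 3 / 6, sqrt 3 / 6, - sqrt 3 / 6, - 1/2, 1/2, - 1/2, 1/2,
                sqrt 3 / 6, sqrt 3 / 6, - sqrt 3 / 6, - sqrt 3 / 6] ! k"

lemma Xb_eq_mscale_Y_basis: "k < 14 \<Longrightarrow> Xb k = mscale (X_scale k) (Y_basis k)"
  by (drule less_14_cases)
    (elim disjE; simp add: Xb_def g2_basis_list_def Y_basis_def Y_list_def X_scale_def)

lemma X_scale_nonzero: "k < 14 \<Longrightarrow> X_scale k \<noteq> 0"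
  by (drule less_14_cases) (elim disjE; simp add: X_scale_def)

definition basis_vec :: "nat \<Rightarrow> nat \<Rightarrow> real" where
  "basis_vec k = (\<lambda>i. if i = k then 1 else 0)"

definition Y_comb :: "(nat \<Rightarrow> real) \<Rightarrow> mat8" where
  "Y_comb x = (\<lambda>i j. \<Sum>k<14. x k * Y_basis k i j)"

lemma Y_comb_cong: "(\<And>k. k < 14 \<Longrightarrow> x k = y k) \<Longrightarrow> Y_comb x = Y_comb y"
  unfolding Y_comb_def by (intro ext sum.cong) auto

lemma g2_elem_eq_Y_comb: "g2_elem a = Y_comb (\<lambda>k. X_scale k * a k)"
  unfolding g2_elem_def Y_comb_def
  by (intro ext sum.cong refl) (simp add: Xb_eq_mscale_Y_basis mscale_def)

lemma Xb_eq_Y_comb: "k < 14 \<Longrightarrow> Xb k = Y_comb (\<lambda>i. X_scale k * basis_vec k i)"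
proof (intro ext)
  fix r c assume "k < 14"
  have "Y_comb (\<lambda>i. X_scale k * basis_vec k i) r c
      = (\<Sum>i<14. if i = k then X_scale k * Y_basis k r c else 0)"
    unfolding Y_comb_def by (rule sum.cong) (auto simp: basis_vec_def)
  with \<open>k < 14\<close> show "Xb k r c = Y_comb (\<lambda>i. X_scale k * basis_vec k i) r c"
    by (simp add: Xb_eq_mscale_Y_basis mscale_def)
qed

lemma Y_comb_in_g2: "Y_comb x \<in> g2"
proof -
  have "Y_comb x = g2_elem (\<lambda>k. x k / X_scale k)"
    unfolding g2_elem_eq_Y_comb by (rule Y_comb_cong) (simp add: X_scale_nonzero)
  then show ?thesis unfolding g2_def by blast
qed

lemma g2_obtain_Y_comb:
  assumes "Z \<in> g2"
  obtains z where "Z = Y_comb z"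
  using assms unfolding g2_def g2_elem_eq_Y_comb by blast

lemma msub_Y_comb: "msub (Y_comb x) (Y_comb y) = Y_comb (\<lambda>k. x k - y k)"
  unfolding msub_def Y_comb_def by (intro ext) (simp add: sum_subtractf[symmetric] left_diff_distrib)

lemma Y_comb_outside:
  assumes "\<not> (r < 8 \<and> c < 8)"
  shows "Y_comb x r c = 0"
proof -
  have "Y_basis k r c = 0" if "k < 14" for k
    using less_14_cases[OF that] assms
    by (elim disjE; auto simp: Y_basis_def Y_list_def madd_def msub_def mscale_def Emat_def)
  then show ?thesis
    by (simp add: Y_comb_def)
qed

text \<open>Stated row by row, so that the simplifier selects one entry without normalising all
  of the others.\<close>

lemma Y_comb_entry:
  assumes "r < 8" "c < 8"
  shows "Y_comb x r c =
    (if r = 0 then 0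
     else if r = 1 then [0, 0, - 2 * x 5, - 2 * x 4, - x 9 - x 12, - x 8 - x 13, - x 7 - x 10, - x 6 - x 11] ! c
     else if r = 2 then [0, 2 * x 5, 0, - 2 * x 3, x 6 - x 11, x 10 - x 7, x 8 - x 13, x 12 - x 9] ! c
     else if r = 3 then [0, 2 * x 4, 2 * x 3, 0, - 2 * x 10, - 2 * x 11, 2 * x 12, 2 * x 13] ! c
     else if r = 4 then [0, x 9 + x 12, x 11 - x 6, 2 * x 10, 0, x 3 - x 0, - x 1 - x 4, x 5 - x 2] ! c
     else if r = 5 then [0, x 8 + x 13, x 7 - x 10, 2 * x 11, x 0 - x 3, 0, - x 2 - x 5, x 1 - x 4] ! c
     else if r = 6 then [0, x 7 + x 10, x 13 - x 8, - 2 * x 12, x 1 + x 4, x 2 + x 5, 0, - x 0 - x 3] ! c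
     else [0, x 6 + x 11, x 9 - x 12, - 2 * x 13, x 2 - x 5, x 4 - x 1, x 0 + x 3, 0] ! c)"
  using less_8_cases[OF assms(1)] less_8_cases[OF assms(2)]
  by (elim disjE; simp add: Y_comb_def Y_basis_def Y_list_def eval_nat_numeral
      madd_def msub_def mscale_def Emat_def)

lemma gmet_eq_columns_4_to_7:
  "gmet A B = (\<Sum>i<8. A i 4 * B i 4 + A i 5 * B i 5 + A i 6 * B i 6 + A i 7 * B i 7)"
  by (simp add: gmet_def actS_def u0_def v0_def sed_e_def eval_nat_numeral)

definition Y_sqnorm :: "nat \<Rightarrow> real" where
  "Y_sqnorm k = (if k < 6 then 4 else if k < 10 then 2 else 6)"

definition metric_Y :: "(nat \<Rightarrow> real) \<Rightarrow> (nat \<Rightarrow> real) \<Rightarrow> real" where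
  "metric_Y x y = (\<Sum>k<14. Y_sqnorm k * x k * y k)"

lemma metric_Y_expand:
  "metric_Y x y = 4 * x 0 * y 0 + 4 * x 1 * y 1 + 4 * x 2 * y 2 + 4 * x 3 * y 3 + 4 * x 4 * y 4
    + 4 * x 5 * y 5 + 2 * x 6 * y 6 + 2 * x 7 * y 7 + 2 * x 8 * y 8 + 2 * x 9 * y 9
    + 6 * x 10 * y 10 + 6 * x 11 * y 11 + 6 * x 12 * y 12 + 6 * x 13 * y 13"
  by (simp add: metric_Y_def Y_sqnorm_def eval_nat_numeral)

lemma Y_sqnorm_pos: "0 < Y_sqnorm k"
  by (simp add: Y_sqnorm_def)

lemma metric_Y_basis_vec: "k < 14 \<Longrightarrow> metric_Y x (basis_vec k) = Y_sqnorm k * x k"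
proof -
  assume "k < 14"
  have "metric_Y x (basis_vec k) = (\<Sum>i<14. if i = k then Y_sqnorm k * x k else 0)"
    unfolding metric_Y_def by (rule sum.cong) (auto simp: basis_vec_def)
  with \<open>k < 14\<close> show ?thesis by simp
qed

lemma gmet_Y_comb: "gmet (Y_comb x) (Y_comb y) = metric_Y x y"
  by (simp add: gmet_eq_columns_4_to_7 Y_comb_entry metric_Y_expand eval_nat_numeral
      algebra_simps)

lemma Y_comb_eq_imp_eq:
  assumes "Y_comb x = Y_comb y" "k < 14"
  shows "x k = y k"
proof -
  have "metric_Y x (basis_vec k) = metric_Y y (basis_vec k)"
    by (simp flip: gmet_Y_comb add: assms(1))
  with assms(2) Y_sqnorm_pos[of k] show ?thesis
    by (simp add: metric_Y_basis_vec)
qed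

lemma g2_eq_if_gmet_eq:
  assumes "W \<in> g2" "W' \<in> g2" "\<And>Z. Z \<in> g2 \<Longrightarrow> gmet W Z = gmet W' Z"
  shows "W = W'"
proof -
  obtain w w' where W: "W = Y_comb w" and W': "W' = Y_comb w'"
    using assms(1,2) by (meson g2_obtain_Y_comb)
  have eq: "metric_Y w (basis_vec k) = metric_Y w' (basis_vec k)" for k
    using assms(3)[OF Y_comb_in_g2] unfolding W W' gmet_Y_comb .
  have "w k = w' k" if "k < 14" for k
    using eq[of k] that Y_sqnorm_pos[of k] by (simp add: metric_Y_basis_vec)
  then show ?thesis
    unfolding W W' by (rule Y_comb_cong)
qed

lemma mmult_expand:
  "mmult A B i j = A i 0 * B 0 j + A i 1 * B 1 j + A i 2 * B 2 j + A i 3 * B 3 j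
    + A i 4 * B 4 j + A i 5 * B 5 j + A i 6 * B 6 j + A i 7 * B 7 j"
  by (simp add: mmult_def eval_nat_numeral)

definition bracket_Y :: "(nat \<Rightarrow> real) \<Rightarrow> (nat \<Rightarrow> real) \<Rightarrow> nat \<Rightarrow> real" where
  "bracket_Y x y m =
    (if m = 0 then 2 * x 1 * y 2 - 2 * x 2 * y 1 - x 6 * y 7 + x 7 * y 6 - x 8 * y 9 + x 9 * y 8
                   + 3 * x 10 * y 11 - 3 * x 11 * y 10 + 3 * x 12 * y 13 - 3 * x 13 * y 12
     else if m = 1 then - 2 * x 0 * y 2 + 2 * x 2 * y 0 + x 6 * y 8 - x 7 * y 9 - x 8 * y 6
                        + x 9 * y 7 - 3 * x 10 * y 12 + 3 * x 11 * y 13 + 3 * x 12 * y 10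
                        - 3 * x 13 * y 11
     else if m = 2 then 2 * x 0 * y 1 - 2 * x 1 * y 0 - x 6 * y 9 - x 7 * y 8 + x 8 * y 7
                        + x 9 * y 6 - 3 * x 10 * y 13 - 3 * x 11 * y 12 + 3 * x 12 * y 11
                        + 3 * x 13 * y 10
     else if m = 3 then - 2 * x 4 * y 5 + 2 * x 5 * y 4 - x 6 * y 10 + x 7 * y 11 + x 8 * y 12
                        - x 9 * y 13 + x 10 * y 6 - 2 * x 10 * y 11 - x 11 * y 7 + 2 * x 11 * y 10
                        - x 12 * y 8 + 2 * x 12 * y 13 + x 13 * y 9 - 2 * x 13 * y 12
     else if m = 4 then 2 * x 3 * y 5 - 2 * x 5 * y 3 - x 6 * y 13 - x 7 * y 12 + x 8 * y 11
                        + x 9 * y 10 - x 10 * y 9 - 2 * x 10 * y 12 - x 11 * y 8 - 2 * x 11 * y 13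
                        + x 12 * y 7 + 2 * x 12 * y 10 + x 13 * y 6 + 2 * x 13 * y 11
     else if m = 5 then - 2 * x 3 * y 4 + 2 * x 4 * y 3 + x 6 * y 9 - x 7 * y 8 + x 8 * y 7
                        - x 9 * y 6 + x 10 * y 13 - x 11 * y 12 + x 12 * y 11 - x 13 * y 10
     else if m = 6 then x 0 * y 7 - x 1 * y 8 + x 2 * y 9 + 3 * x 3 * y 10 + 3 * x 4 * y 13
                        - 3 * x 5 * y 9 - x 7 * y 0 + x 8 * y 1 - x 9 * y 2 + 3 * x 9 * y 5
                        - 3 * x 10 * y 3 - 3 * x 13 * y 4
     else if m = 7 then - x 0 * y 6 + x 1 * y 9 + x 2 * y 8 - 3 * x 3 * y 11 + 3 * x 4 * y 12
                        + 3 * x 5 * y 8 + x 6 * y 0 - x 8 * y 2 - 3 * x 8 * y 5 - x 9 * y 1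
                        + 3 * x 11 * y 3 - 3 * x 12 * y 4
     else if m = 8 then x 0 * y 9 + x 1 * y 6 - x 2 * y 7 - 3 * x 3 * y 12 - 3 * x 4 * y 11
                        - 3 * x 5 * y 7 - x 6 * y 1 + x 7 * y 2 + 3 * x 7 * y 5 - x 9 * y 0
                        + 3 * x 11 * y 4 + 3 * x 12 * y 3
     else if m = 9 then - x 0 * y 8 - x 1 * y 7 - x 2 * y 6 + 3 * x 3 * y 13 - 3 * x 4 * y 10
                        + 3 * x 5 * y 6 + x 6 * y 2 - 3 * x 6 * y 5 + x 7 * y 1 + x 8 * y 0
                        + 3 * x 10 * y 4 - 3 * x 13 * y 3
     else if m = 10 then - x 0 * y 11 + x 1 * y 12 + x 2 * y 13 - x 3 * y 6 + 2 * x 3 * y 11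
                         + x 4 * y 9 + 2 * x 4 * y 12 - x 5 * y 13 + x 6 * y 3 - x 9 * y 4
                         + x 11 * y 0 - 2 * x 11 * y 3 - x 12 * y 1 - 2 * x 12 * y 4 - x 13 * y 2
                         + x 13 * y 5
     else if m = 11 then x 0 * y 10 - x 1 * y 13 + x 2 * y 12 + x 3 * y 7 - 2 * x 3 * y 10
                         + x 4 * y 8 + 2 * x 4 * y 13 + x 5 * y 12 - x 7 * y 3 - x 8 * y 4
                         - x 10 * y 0 + 2 * x 10 * y 3 - x 12 * y 2 - x 12 * y 5 + x 13 * y 1
                         - 2 * x 13 * y 4
     else if m = 12 then - x 0 * y 13 - x 1 * y 10 - x 2 * y 11 + x 3 * y 8 - 2 * x 3 * y 13
                         - x 4 * y 7 - 2 * x 4 * y 10 - x 5 * y 11 + x 7 * y 4 - x 8 * y 3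
                         + x 10 * y 1 + 2 * x 10 * y 4 + x 11 * y 2 + x 11 * y 5 + x 13 * y 0
                         + 2 * x 13 * y 3
     else if m = 13 then x 0 * y 12 + x 1 * y 11 - x 2 * y 10 - x 3 * y 9 + 2 * x 3 * y 12
                         - x 4 * y 6 - 2 * x 4 * y 11 + x 5 * y 10 + x 6 * y 4 + x 9 * y 3
                         + x 10 * y 2 - x 10 * y 5 - x 11 * y 1 + 2 * x 11 * y 4 - x 12 * y 0
                         - 2 * x 12 * y 3
     else 0)"

lemma mbracket_Y_comb: "mbracket (Y_comb x) (Y_comb y) = Y_comb (bracket_Y x y)"
proof (intro ext)
  fix r c :: nat
  show "mbracket (Y_comb x) (Y_comb y) r c = Y_comb (bracket_Y x y) r c"
  proof (cases "r < 8 \<and> c < 8")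
    case True
    then have "r < 8" "c < 8" by auto
    then show ?thesis
      using less_8_cases[OF \<open>r < 8\<close>] less_8_cases[OF \<open>c < 8\<close>]
      by (elim disjE; simp add: Y_comb_entry mbracket_def msub_def mmult_expand bracket_Y_def
          algebra_simps)
  next
    case False
    then show ?thesis
      by (auto simp: Y_comb_outside mbracket_def msub_def mmult_def)
  qed
qed

lemma LC_eqI:
  assumes "W \<in> g2"
    and "\<And>Z. Z \<in> g2 \<Longrightarrow>
      gmet W Z = 1/2 * (gmet (mbracket A B) Z - gmet (mbracket B Z) A + gmet (mbracket Z A) B)"
  shows "LC A B = W"
  unfolding LC_def
proof (rule the_equality)
  show "W \<in> g2 \<and> (\<forall>Z\<in>g2. gmet W Z =
      1/2 * (gmet (mbracket A B) Z - gmet (mbracket B Z) A + gmet (mbracket Z A) B))"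
    using assms by blast
  fix W' assume "W' \<in> g2 \<and> (\<forall>Z\<in>g2. gmet W' Z =
      1/2 * (gmet (mbracket A B) Z - gmet (mbracket B Z) A + gmet (mbracket Z A) B))"
  then show "W' = W"
    using assms by (metis g2_eq_if_gmet_eq)
qed

definition LC_Y :: "(nat \<Rightarrow> real) \<Rightarrow> (nat \<Rightarrow> real) \<Rightarrow> nat \<Rightarrow> real" where
  "LC_Y x y m =
    (if m = 0 then x 1 * y 2 - x 2 * y 1 - 1/2 * x 6 * y 7 + 1/2 * x 7 * y 6 - 1/2 * x 8 * y 9
                   + 1/2 * x 9 * y 8 + 3/2 * x 10 * y 11 - 3/2 * x 11 * y 10 + 3/2 * x 12 * y 13
                   - 3/2 * x 13 * y 12
     else if m = 1 then - x 0 * y 2 + x 2 * y 0 + 1/2 * x 6 * y 8 - 1/2 * x 7 * y 9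
                        - 1/2 * x 8 * y 6 + 1/2 * x 9 * y 7 - 3/2 * x 10 * y 12
                        + 3/2 * x 11 * y 13 + 3/2 * x 12 * y 10 - 3/2 * x 13 * y 11
     else if m = 2 then x 0 * y 1 - x 1 * y 0 - 1/2 * x 6 * y 9 - 1/2 * x 7 * y 8
                        + 1/2 * x 8 * y 7 + 1/2 * x 9 * y 6 - 3/2 * x 10 * y 13
                        - 3/2 * x 11 * y 12 + 3/2 * x 12 * y 11 + 3/2 * x 13 * y 10
     else if m = 3 then - x 4 * y 5 + x 5 * y 4 - 1/2 * x 6 * y 10 + 1/2 * x 7 * y 11
                        + 1/2 * x 8 * y 12 - 1/2 * x 9 * y 13 + 1/2 * x 10 * y 6 - x 10 * y 11
                        - 1/2 * x 11 * y 7 + x 11 * y 10 - 1/2 * x 12 * y 8 + x 12 * y 13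
                        + 1/2 * x 13 * y 9 - x 13 * y 12
     else if m = 4 then x 3 * y 5 - x 5 * y 3 - 1/2 * x 6 * y 13 - 1/2 * x 7 * y 12
                        + 1/2 * x 8 * y 11 + 1/2 * x 9 * y 10 - 1/2 * x 10 * y 9 - x 10 * y 12
                        - 1/2 * x 11 * y 8 - x 11 * y 13 + 1/2 * x 12 * y 7 + x 12 * y 10
                        + 1/2 * x 13 * y 6 + x 13 * y 11
     else if m = 5 then - x 3 * y 4 + x 4 * y 3 + 1/2 * x 6 * y 9 - 1/2 * x 7 * y 8
                        + 1/2 * x 8 * y 7 - 1/2 * x 9 * y 6 + 1/2 * x 10 * y 13
                        - 1/2 * x 11 * y 12 + 1/2 * x 12 * y 11 - 1/2 * x 13 * y 10
     else if m = 6 then 2 * x 3 * y 10 + 2 * x 4 * y 13 - 2 * x 5 * y 9 - x 7 * y 0 + x 8 * y 1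
                        - x 9 * y 2 + x 9 * y 5 - x 10 * y 3 - x 13 * y 4
     else if m = 7 then - 2 * x 3 * y 11 + 2 * x 4 * y 12 + 2 * x 5 * y 8 + x 6 * y 0 - x 8 * y 2
                        - x 8 * y 5 - x 9 * y 1 + x 11 * y 3 - x 12 * y 4
     else if m = 8 then - 2 * x 3 * y 12 - 2 * x 4 * y 11 - 2 * x 5 * y 7 - x 6 * y 1 + x 7 * y 2
                        + x 7 * y 5 - x 9 * y 0 + x 11 * y 4 + x 12 * y 3
     else if m = 9 then 2 * x 3 * y 13 - 2 * x 4 * y 10 + 2 * x 5 * y 6 + x 6 * y 2 - x 6 * y 5
                        + x 7 * y 1 + x 8 * y 0 + x 10 * y 4 - x 13 * y 3
     else if m = 10 then - 2/3 * x 3 * y 6 + 4/3 * x 3 * y 11 + 2/3 * x 4 * y 9 + 4/3 * x 4 * y 12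
                         - 2/3 * x 5 * y 13 + 1/3 * x 6 * y 3 - 1/3 * x 9 * y 4 + x 11 * y 0
                         - 2/3 * x 11 * y 3 - x 12 * y 1 - 2/3 * x 12 * y 4 - x 13 * y 2
                         + 1/3 * x 13 * y 5
     else if m = 11 then 2/3 * x 3 * y 7 - 4/3 * x 3 * y 10 + 2/3 * x 4 * y 8 + 4/3 * x 4 * y 13
                         + 2/3 * x 5 * y 12 - 1/3 * x 7 * y 3 - 1/3 * x 8 * y 4 - x 10 * y 0
                         + 2/3 * x 10 * y 3 - x 12 * y 2 - 1/3 * x 12 * y 5 + x 13 * y 1
                         - 2/3 * x 13 * y 4
     else if m = 12 then 2/3 * x 3 * y 8 - 4/3 * x 3 * y 13 - 2/3 * x 4 * y 7 - 4/3 * x 4 * y 10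
                         - 2/3 * x 5 * y 11 + 1/3 * x 7 * y 4 - 1/3 * x 8 * y 3 + x 10 * y 1
                         + 2/3 * x 10 * y 4 + x 11 * y 2 + 1/3 * x 11 * y 5 + x 13 * y 0
                         + 2/3 * x 13 * y 3
     else if m = 13 then - 2/3 * x 3 * y 9 + 4/3 * x 3 * y 12 - 2/3 * x 4 * y 6 - 4/3 * x 4 * y 11
                         + 2/3 * x 5 * y 10 + 1/3 * x 6 * y 4 + 1/3 * x 9 * y 3 + x 10 * y 2
                         - 1/3 * x 10 * y 5 - x 11 * y 1 + 2/3 * x 11 * y 4 - x 12 * y 0
                         - 2/3 * x 12 * y 3
     else 0)"

lemma koszul_LC_Y:
  "metric_Y (LC_Y x y) z =
    1/2 * (metric_Y (bracket_Y x y) z - metric_Y (bracket_Y y z) x + metric_Y (bracket_Y z x) y)"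
  unfolding metric_Y_expand by (simp add: LC_Y_def bracket_Y_def; algebra)

lemma LC_Y_comb: "LC (Y_comb x) (Y_comb y) = Y_comb (LC_Y x y)"
proof (rule LC_eqI[OF Y_comb_in_g2])
  fix Z assume "Z \<in> g2"
  then obtain z where "Z = Y_comb z" by (rule g2_obtain_Y_comb)
  then show "gmet (Y_comb (LC_Y x y)) Z = 1/2 * (gmet (mbracket (Y_comb x) (Y_comb y)) Z
      - gmet (mbracket (Y_comb y) Z) (Y_comb x) + gmet (mbracket Z (Y_comb x)) (Y_comb y))"
    by (simp add: mbracket_Y_comb gmet_Y_comb koszul_LC_Y)
qed

definition curv_Y :: "(nat \<Rightarrow> real) \<Rightarrow> (nat \<Rightarrow> real) \<Rightarrow> (nat \<Rightarrow> real) \<Rightarrow> nat \<Rightarrow> real" where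
  "curv_Y x y z m = LC_Y x (LC_Y y z) m - LC_Y y (LC_Y x z) m - LC_Y (bracket_Y x y) z m"

lemma curv_Y_comb: "curv (Y_comb x) (Y_comb y) (Y_comb z) = Y_comb (curv_Y x y z)"
  unfolding curv_def LC_Y_comb mbracket_Y_comb msub_Y_comb curv_Y_def ..

lemma LC_Y_scale_left: "LC_Y (\<lambda>i. t * x i) y = (\<lambda>m. t * LC_Y x y m)"
  by (rule ext) (simp add: LC_Y_def algebra_simps)

lemma LC_Y_scale_right: "LC_Y x (\<lambda>i. t * y i) = (\<lambda>m. t * LC_Y x y m)"
  by (rule ext) (simp add: LC_Y_def algebra_simps)

lemma bracket_Y_scale_left: "bracket_Y (\<lambda>i. t * x i) y = (\<lambda>m. t * bracket_Y x y m)"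
  by (rule ext) (simp add: bracket_Y_def algebra_simps)

lemma curv_Y_scale_left: "curv_Y (\<lambda>i. t * x i) y z m = t * curv_Y x y z m"
  by (simp add: curv_Y_def LC_Y_scale_left LC_Y_scale_right bracket_Y_scale_left algebra_simps)

definition ricci_Y :: "(nat \<Rightarrow> real) \<Rightarrow> (nat \<Rightarrow> real) \<Rightarrow> real" where
  "ricci_Y p q = (\<Sum>k<14. curv_Y (basis_vec k) p q k)"

definition ricci_Y_weight :: "nat \<Rightarrow> real" where
  "ricci_Y_weight k = (if k < 3 then 10 else if k < 6 then 58/9 else if k < 10 then 10/3 else 10)"

lemma ricci_Y_diagonal: "ricci_Y p q = (\<Sum>k<14. ricci_Y_weight k * p k * q k)"
  by (simp add: ricci_Y_def ricci_Y_weight_def eval_nat_numeral curv_Y_def LC_Y_def bracket_Y_def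
      basis_vec_def algebra_simps)

lemma g2_coord_Y_comb:
  assumes "k < 14"
  shows "g2_coord k (Y_comb w) = w k / X_scale k"
proof -
  define a where "a i = (if i < 14 then w i / X_scale i else 0)" for i
  have a: "(\<forall>i\<ge>14. a i = 0) \<and> g2_elem a = Y_comb w"
    unfolding a_def g2_elem_eq_Y_comb by (auto intro!: Y_comb_cong simp: X_scale_nonzero)
  have "(THE a. (\<forall>i\<ge>14. a i = 0) \<and> g2_elem a = Y_comb w) = a"
  proof (rule the_equality)
    fix a' assume a': "(\<forall>i\<ge>14. a' i = 0) \<and> g2_elem a' = Y_comb w"
    have "X_scale i * a' i = X_scale i * a i" if "i < 14" for i
      using a a' that by (intro Y_comb_eq_imp_eq) (simp_all add: g2_elem_eq_Y_comb)
    with a a' show "a' = a"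
      by (intro ext) (metis X_scale_nonzero mult_left_cancel not_le)
  qed (rule a)
  with assms show ?thesis
    by (simp add: g2_coord_def a_def)
qed

lemma ricci_g2_elem_eq_ricci_Y:
  "ricci (g2_elem a) (g2_elem b) = ricci_Y (\<lambda>k. X_scale k * a k) (\<lambda>k. X_scale k * b k)"
  unfolding ricci_def ricci_Y_def
proof (rule sum.cong[OF refl])
  fix k assume "k \<in> {..<14::nat}"
  then have "k < 14" by simp
  then show "g2_coord k (curv (Xb k) (g2_elem a) (g2_elem b))
      = curv_Y (basis_vec k) (\<lambda>k. X_scale k * a k) (\<lambda>k. X_scale k * b k) k"
    by (simp add: Xb_eq_Y_comb g2_elem_eq_Y_comb curv_Y_comb g2_coord_Y_comb curv_Y_scale_left
        X_scale_nonzero)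
qed

definition ricci_coeff :: "nat \<Rightarrow> real" where
  "ricci_coeff k = (if k < 3 then 5/2 else if k < 6 then 29/54 else 5/6)"

lemma ricci_Y_weight_X_scale:
  "k < 14 \<Longrightarrow> ricci_Y_weight k * (X_scale k * X_scale k) = ricci_coeff k"
  by (drule less_14_cases)
    (elim disjE; simp add: ricci_Y_weight_def X_scale_def ricci_coeff_def)

lemma ricci_g2_elem: "ricci (g2_elem a) (g2_elem b) = (\<Sum>k<14. ricci_coeff k * a k * b k)"
  unfolding ricci_g2_elem_eq_ricci_Y ricci_Y_diagonal
proof (rule sum.cong[OF refl])
  fix k assume "k \<in> {..<14::nat}"
  then show "ricci_Y_weight k * (X_scale k * a k) * (X_scale k * b k) = ricci_coeff k * a k * b k"
    using ricci_Y_weight_X_scale[of k] by (simp add: algebra_simps)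
qed

lemma ricci_coeff_pos: "0 < ricci_coeff k"
  by (simp add: ricci_coeff_def)

lemma sum_ricci_coeff_blocks:
  "(\<Sum>k<14. ricci_coeff k * a k * b k) =
    5/2 * (\<Sum>i<3. a i * b i) + 29/54 * (\<Sum>i\<in>{3..<6}. a i * b i)
      + 5/6 * (\<Sum>i\<in>{6..<14}. a i * b i)"
  by (simp add: ricci_coeff_def eval_nat_numeral atLeastLessThanSuc algebra_simps)

lemma ricci_pos:
  assumes "X \<in> g2" "X \<noteq> mzero"
  shows "0 < ricci X X"
proof -
  obtain a where X: "X = g2_elem a"
    using assms(1) unfolding g2_def by blast
  obtain j where "j < 14" "a j \<noteq> 0"
  proof (rule ccontr)
    assume "\<not> thesis"
    with that have "\<forall>j<14. a j = 0" by blast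
    then have "g2_elem a = mzero"
      unfolding g2_elem_def mzero_def by (intro ext) simp
    with assms(2) X show False by simp
  qed
  then show ?thesis
    unfolding X ricci_g2_elem
    by (simp add: mult.assoc weighted_sum_squares_pos ricci_coeff_pos)
qed

theorem mainTheorem2:
  shows "(u0, v0) \<in> ZS
    \<and> (\<forall>X\<in>g2. X \<noteq> mzero \<longrightarrow> ricci X X > 0)
    \<and> (\<forall>a b. ricci (g2_elem a) (g2_elem b) =
          5/2 * (\<Sum>i<3. a i * b i)
        + 29/54 * (\<Sum>i\<in>{3..<6}. a i * b i)
        + 5/6 * (\<Sum>i\<in>{6..<14}. a i * b i))"
  using u0_v0_in_ZS ricci_pos ricci_g2_elem sum_ricci_coeff_blocks by simp

end
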